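(* For every rational number $p/q$ with $4/5 \le p/q < 1$, there exist infinitely many $2$-connected (bridgeless) cubic graphs $G$ such that $m_3(G) = p/q$.
   Context: For a bridgeless cubic graph $G$, $m_3(G)$ denotes the maximum, over all choices of three perfect matchings $M_1, M_2, M_3$ of $G$, of $|M_1\cup M_2\cup M_3|$, divided by $|E(G)|$. *)

theory Defs
  imports Complex_Main
begin

type_synonym graph = "nat set \<times> nat set set"

definition verts :: "graph \<Rightarrow> nat set" where "verts G = fst G"
definition edges :: "graph \<Rightarrow> nat set set" where "edges G = snd G"

definition wf_graph :: "graph \<Rightarrow> bool" where
  "wf_graph G \<longleftrightarrow> finite (verts G) \<and> (\<forall>e\<in>edges G. e \<subseteq> verts G \<and> card e = 2)"

definition degree :: "graph \<Rightarrow> nat \<Rightarrow> nat" where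
  "degree G v = card {e\<in>edges G. v \<in> e}"

definition cubic :: "graph \<Rightarrow> bool" where
  "cubic G \<longleftrightarrow> (\<forall>v\<in>verts G. degree G v = 3)"

definition adj :: "graph \<Rightarrow> (nat \<times> nat) set" where
  "adj G = {(u, v). {u, v} \<in> edges G}"

definition connected_graph :: "graph \<Rightarrow> bool" where
  "connected_graph G \<longleftrightarrow> verts G \<noteq> {} \<and>
     (\<forall>u\<in>verts G. \<forall>v\<in>verts G. (u, v) \<in> (adj G)\<^sup>*)"

definition delete_vertex :: "graph \<Rightarrow> nat \<Rightarrow> graph" where
  "delete_vertex G v = (verts G - {v}, {e\<in>edges G. v \<notin> e})"

definition delete_edge :: "graph \<Rightarrow> nat set \<Rightarrow> graph" where
  "delete_edge G e = (verts G, edges G - {e})"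

definition two_connected :: "graph \<Rightarrow> bool" where
  "two_connected G \<longleftrightarrow> card (verts G) \<ge> 3 \<and> connected_graph G \<and>
     (\<forall>v\<in>verts G. connected_graph (delete_vertex G v))"

definition bridgeless :: "graph \<Rightarrow> bool" where
  "bridgeless G \<longleftrightarrow> (\<forall>u v. {u, v} \<in> edges G \<longrightarrow> (u, v) \<in> (adj (delete_edge G {u, v}))\<^sup>*)"

definition perfect_matching :: "graph \<Rightarrow> nat set set \<Rightarrow> bool" where
  "perfect_matching G M \<longleftrightarrow> M \<subseteq> edges G \<and> (\<forall>v\<in>verts G. \<exists>!e. e \<in> M \<and> v \<in> e)"

definition m3 :: "graph \<Rightarrow> real" where
  "m3 G = real (Max {card (M1 \<union> M2 \<union> M3) | M1 M2 M3.
             perfect_matching G M1 \<and> perfect_matching G M2 \<and> perfect_matching G M3})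
          / real (card (edges G))"

definition graph_iso :: "graph \<Rightarrow> graph \<Rightarrow> bool" where
  "graph_iso G H \<longleftrightarrow> (\<exists>f. bij_betw f (verts G) (verts H) \<and>
     (\<forall>u\<in>verts G. \<forall>v\<in>verts G. {u, v} \<in> edges G \<longleftrightarrow> {f u, f v} \<in> edges H))"

end

theory Submission
  imports Defs
begin

text \<open>The graphs are rings of N gadgets, each the Petersen graph or the pentagonal prism with one
  spoke removed, consecutive gadgets being joined by an edge between the two vertices of degree 2.
  A perfect matching meets a Petersen gadget together with its outgoing connector in one of the six
  perfect matchings of the Petersen graph, and any three of these cover at most 12 of those 15 edges;
  conversely, three explicit perfect matchings of the ring cover 12 edges of every Petersen gadget
  and all 15 edges of every prism gadget. With a Petersen gadgets among N this gives
  m3 = (15 N - 3 a) / (15 N) = 1 - a / (5 N), which equals p / q for N = t q and a = 5 t (q - p),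
  t = 1, 2, ...; the rings have different orders, hence are pairwise non-isomorphic. Deleting a
  vertex keeps every gadget attached to the rest of the ring, which gives 2-connectivity.\<close>

lemma adj_iff_edge: "(u, v) \<in> adj G \<longleftrightarrow> {u, v} \<in> edges G"
  by (simp add: adj_def)

lemma adj_sym: "(u, v) \<in> adj G \<Longrightarrow> (v, u) \<in> adj G"
  by (simp add: adj_def insert_commute)

lemma rtrancl_adj_sym: "(u, v) \<in> (adj G)\<^sup>* \<Longrightarrow> (v, u) \<in> (adj G)\<^sup>*"
proof -
  have "sym (adj G)" by (auto simp: sym_def intro: adj_sym)
  then have "sym ((adj G)\<^sup>*)" by (rule sym_rtrancl)
  then show "(u, v) \<in> (adj G)\<^sup>* \<Longrightarrow> (v, u) \<in> (adj G)\<^sup>*" by (auto simp: sym_def)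
qed

lemma verts_delete_vertex [simp]: "verts (delete_vertex G x) = verts G - {x}"
  by (simp add: delete_vertex_def verts_def)

lemma edges_delete_vertex [simp]: "edges (delete_vertex G x) = {e \<in> edges G. x \<notin> e}"
  by (simp add: delete_vertex_def edges_def)

lemma edges_delete_edge [simp]: "edges (delete_edge G f) = edges G - {f}"
  by (simp add: delete_edge_def edges_def)

lemma cubic_other_neighbour:
  assumes wf: "wf_graph G" and cu: "cubic G" and v: "v \<in> verts G"
  obtains y where "{v, y} \<in> edges G" "y \<noteq> v" "y \<noteq> u" "y \<in> verts G"
proof -
  let ?I = "{e \<in> edges G. v \<in> e}"
  have "card ?I = 3" using cu v by (simp add: cubic_def degree_def)
  then have "\<not> ?I \<subseteq> {{v, u}}" using card_mono[of "{{v, u}}" ?I] by auto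
  then obtain E where E: "E \<in> edges G" "v \<in> E" "E \<noteq> {v, u}" by blast
  have "E \<subseteq> verts G" "card E = 2" using wf E(1) by (auto simp: wf_graph_def)
  then obtain z where "E = {v, z}" "z \<noteq> v" "z \<in> verts G"
    using E(2) by (auto simp: card_2_iff doubleton_eq_iff)
  then show thesis using that E by blast
qed

lemma connected_if_connected_delete_vertex:
  assumes conn: "connected_graph (delete_vertex G x)" and "{x, y} \<in> edges G" "y \<noteq> x" "y \<in> verts G"
  shows "connected_graph G"
proof -
  have "(adj (delete_vertex G x))\<^sup>* \<subseteq> (adj G)\<^sup>*" by (rule rtrancl_mono) (auto simp: adj_iff_edge)
  moreover have "(u, y) \<in> (adj (delete_vertex G x))\<^sup>*" if "u \<in> verts G" "u \<noteq> x" for u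
    using conn that assms(3,4) by (auto simp: connected_graph_def)
  moreover have "(x, y) \<in> adj G" using assms(2) by (simp add: adj_iff_edge)
  ultimately have to_y: "(u, y) \<in> (adj G)\<^sup>*" if "u \<in> verts G" for u
    using that by (cases "u = x") auto
  show ?thesis
    unfolding connected_graph_def using to_y rtrancl_adj_sym assms(4) by (blast intro: rtrancl_trans)
qed

lemma bridgeless_if_connected_delete_vertex:
  assumes wf: "wf_graph G" and cu: "cubic G"
    and conn: "\<forall>v\<in>verts G. connected_graph (delete_vertex G v)"
  shows "bridgeless G"
  unfolding bridgeless_def
proof (intro allI impI)
  fix u v assume uv: "{u, v} \<in> edges G"
  then have "{u, v} \<subseteq> verts G" "card {u, v} = 2" using wf by (auto simp: wf_graph_def)
  then have u: "u \<in> verts G" and v: "v \<in> verts G" "u \<noteq> v" by (auto simp: card_insert_if split: if_splits)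
  obtain y where y: "{u, y} \<in> edges G" "y \<noteq> u" "y \<noteq> v" "y \<in> verts G"
    using cubic_other_neighbour[OF wf cu u] by blast
  have "(y, v) \<in> (adj (delete_vertex G u))\<^sup>*" using conn u v y by (auto simp: connected_graph_def)
  moreover have "adj (delete_vertex G u) \<subseteq> adj (delete_edge G {u, v})" by (auto simp: adj_iff_edge)
  ultimately have "(y, v) \<in> (adj (delete_edge G {u, v}))\<^sup>*" using rtrancl_mono by blast
  moreover have "(u, y) \<in> adj (delete_edge G {u, v})" using y by (auto simp: adj_iff_edge doubleton_eq_iff)
  ultimately show "(u, v) \<in> (adj (delete_edge G {u, v}))\<^sup>*" by (rule converse_rtrancl_into_rtrancl[rotated])
qed

lemma two_connected_if_connected_delete_vertex:
  assumes wf: "wf_graph G" and cu: "cubic G" and three: "card (verts G) \<ge> 3"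
    and conn: "\<forall>v\<in>verts G. connected_graph (delete_vertex G v)"
  shows "two_connected G"
proof -
  obtain v where v: "v \<in> verts G" using three by fastforce
  obtain y where "{v, y} \<in> edges G" "y \<noteq> v" "y \<in> verts G"
    using cubic_other_neighbour[OF wf cu v] by blast
  then have "connected_graph G" using connected_if_connected_delete_vertex conn v by blast
  then show ?thesis using three conn by (simp add: two_connected_def)
qed

lemma m3_eqI:
  assumes "finite (edges G)"
    and "\<And>M1 M2 M3. perfect_matching G M1 \<Longrightarrow> perfect_matching G M2 \<Longrightarrow> perfect_matching G M3 \<Longrightarrow>
           card (M1 \<union> M2 \<union> M3) \<le> c"
    and "perfect_matching G M1" "perfect_matching G M2" "perfect_matching G M3"
    and "card (M1 \<union> M2 \<union> M3) = c"
  shows "m3 G = real c / real (card (edges G))"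
proof -
  let ?A = "{card (M1 \<union> M2 \<union> M3) | M1 M2 M3.
    perfect_matching G M1 \<and> perfect_matching G M2 \<and> perfect_matching G M3}"
  have "?A \<subseteq> {..c}" using assms(2) by auto
  then have "Max ?A = c" using assms(3-6) by (intro Max_eqI) (auto intro: finite_subset)
  then show ?thesis by (simp add: m3_def)
qed

lemma card_verts_eq_if_graph_iso: "graph_iso G H \<Longrightarrow> card (verts G) = card (verts H)"
  unfolding graph_iso_def using bij_betw_same_card by blast

lemma all_less_numeral: "(\<forall>i < numeral n. P i) \<longleftrightarrow> P (pred_numeral n) \<and> (\<forall>i < pred_numeral n. P (i::nat))"
  by (simp add: numeral_eq_Suc All_less_Suc conj_commute)

lemma ex_less_numeral: "(\<exists>i < numeral n. P i) \<longleftrightarrow> P (pred_numeral n) \<or> (\<exists>i < pred_numeral n. P (i::nat))"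
  by (simp add: numeral_eq_Suc Ex_less_Suc disj_commute)

fun exactly_one :: "bool list \<Rightarrow> bool" where
  "exactly_one [] = False"
| "exactly_one (b # bs) = (b \<and> (\<forall>c\<in>set bs. \<not> c) \<or> \<not> b \<and> exactly_one bs)"

lemma ex1_in_set_iff_exactly_one:
  "distinct xs \<Longrightarrow> (\<exists>!x. x \<in> set xs \<and> P x) \<longleftrightarrow> exactly_one (map P xs)"
  by (induction xs) auto

section \<open>The gadgets\<close>

text \<open>Vertices 0..9: an outer 5-cycle 0..4, spokes from i to i+5 for i = 1..4, and on 5..9 a
  pentagram (the Petersen graph minus the spoke 0-5, for True) or a pentagon (the pentagonal prism
  minus that spoke, for False). Local edges 0..13 are the entries of gadget_edges; local edge 14 is
  the connector leaving the gadget at vertex 5, and the connector of the previous gadget enters at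
  vertex 0.\<close>

definition gadget_edges :: "bool \<Rightarrow> (nat \<times> nat) list" where
  "gadget_edges T = [(0,1),(1,2),(2,3),(3,4),(0,4),(1,6),(2,7),(3,8),(4,9)] @
     (if T then [(5,7),(7,9),(6,9),(6,8),(5,8)] else [(5,6),(6,7),(7,8),(8,9),(5,9)])"

definition gadget_edge :: "bool \<Rightarrow> nat \<Rightarrow> nat set" where
  "gadget_edge T e = (if e < 14 then {fst (gadget_edges T ! e), snd (gadget_edges T ! e)} else {5})"

definition gadget_incidence :: "bool \<Rightarrow> nat \<Rightarrow> nat list" where
  "gadget_incidence T j = (if j = 0 then [0,4] else if j = 1 then [0,1,5] else if j = 2 then [1,2,6]
     else if j = 3 then [2,3,7] else if j = 4 then [3,4,8] else if j = 5 then [9,13,14]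
     else if T then
       (if j = 6 then [5,11,12] else if j = 7 then [6,9,10] else if j = 8 then [7,12,13] else [8,10,11])
     else (if j = 6 then [5,9,10] else if j = 7 then [6,10,11] else if j = 8 then [7,11,12] else [8,12,13]))"

text \<open>Here x e says whether local edge e is chosen and y whether the incoming connector is.\<close>

definition gadget_matching :: "bool \<Rightarrow> (nat \<Rightarrow> bool) \<Rightarrow> bool \<Rightarrow> bool" where
  "gadget_matching T x y \<longleftrightarrow>
     (\<forall>j<10. exactly_one (map x (gadget_incidence T j) @ (if j = 0 then [y] else [])))"

lemma length_gadget_edges: "length (gadget_edges T) = 14"
  and distinct_gadget_edges: "distinct (gadget_edges T)"
  by (simp_all add: gadget_edges_def)

lemma gadget_edges_ordered:
  "e < 14 \<Longrightarrow> fst (gadget_edges T ! e) < snd (gadget_edges T ! e) \<and> snd (gadget_edges T ! e) < 10"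
  by (cases T) (auto simp: gadget_edges_def all_less_numeral less_Suc_eq numeral_eq_Suc)

lemma gadget_incidence_less: "e \<in> set (gadget_incidence T j) \<Longrightarrow> e < 15"
  by (auto simp: gadget_incidence_def split: if_splits)

lemma gadget_incidence_correct: "\<forall>e<15. \<forall>j<10. e \<in> set (gadget_incidence T j) \<longleftrightarrow> j \<in> gadget_edge T e"
  by (cases T) (simp_all add: all_less_numeral gadget_incidence_def gadget_edge_def gadget_edges_def)

lemma mem_gadget_incidence_iff: "j < 10 \<Longrightarrow> e \<in> set (gadget_incidence T j) \<longleftrightarrow> e < 15 \<and> j \<in> gadget_edge T e"
  using gadget_incidence_less gadget_incidence_correct by blast

lemma distinct_gadget_incidence: "distinct (gadget_incidence T j)"
  by (simp add: gadget_incidence_def)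

lemma length_gadget_incidence: "j < 10 \<Longrightarrow> length (gadget_incidence T j) = (if j = 0 then 2 else 3)"
  by (auto simp: gadget_incidence_def less_Suc_eq numeral_eq_Suc)

lemma gadget_matching_cong:
  assumes "\<And>e. e < 15 \<Longrightarrow> x e = x' e"
  shows "gadget_matching T x y = gadget_matching T x' y"
proof -
  have eq: "map x (gadget_incidence T j) = map x' (gadget_incidence T j)" for j
    using assms gadget_incidence_less by simp
  show ?thesis unfolding gadget_matching_def eq ..
qed

text \<open>The six perfect matchings of the Petersen graph, the spoke 0-5 being replaced by the two
  connectors.\<close>

definition petersen_pattern :: "nat \<Rightarrow> nat list" where
  "petersen_pattern k = [[0,2,8,9,12],[0,3,6,11,13],[1,3,10,12,14],[1,4,7,9,11],[2,4,5,10,13],[5,6,7,8,14]] ! k"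

lemma gadget_matching_petersen_pattern:
  "gadget_matching True x y \<Longrightarrow> \<exists>k<6. \<forall>e<15. x e \<longleftrightarrow> e \<in> set (petersen_pattern k)"
  unfolding gadget_matching_def
  by (simp add: all_less_numeral ex_less_numeral gadget_incidence_def petersen_pattern_def) sat

lemma petersen_pattern_less: "k < 6 \<Longrightarrow> e \<in> set (petersen_pattern k) \<Longrightarrow> e < 15"
  by (auto simp: petersen_pattern_def all_less_numeral less_Suc_eq numeral_eq_Suc)

lemma card_three_petersen_patterns:
  "k1 < 6 \<Longrightarrow> k2 < 6 \<Longrightarrow> k3 < 6 \<Longrightarrow>
     card (set (petersen_pattern k1 @ petersen_pattern k2 @ petersen_pattern k3)) \<le> 12"
  unfolding card_set by (auto simp: petersen_pattern_def less_Suc_eq numeral_eq_Suc)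

text \<open>Three local matchings that fit together around the ring: only the first one uses the
  connectors.\<close>

definition cover_pattern :: "nat \<Rightarrow> bool \<Rightarrow> nat list" where
  "cover_pattern k T = (if k = 0 then [1,3,10,12,14]
     else if k = 1 then (if T then [1,4,7,9,11] else [0,2,8,9,11])
     else (if T then [2,4,5,10,13] else [4,5,6,7,13]))"

lemma gadget_matching_cover_pattern:
  "gadget_matching T (\<lambda>e. e \<in> set (cover_pattern k T)) (14 \<in> set (cover_pattern k T'))"
  unfolding gadget_matching_def
  by (cases T; cases T') (simp_all add: all_less_numeral gadget_incidence_def cover_pattern_def)

lemma cover_pattern_less: "e \<in> set (cover_pattern k T) \<Longrightarrow> e < 15"
  by (auto simp: cover_pattern_def split: if_splits)

lemma card_cover_patterns:
  "card (set (cover_pattern 0 T @ cover_pattern 1 T @ cover_pattern 2 T)) = (if T then 12 else 15)"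
  unfolding card_set by (cases T) (simp_all add: cover_pattern_def)

section \<open>The ring of gadgets\<close>

definition ring_pred :: "nat \<Rightarrow> nat \<Rightarrow> nat" where
  "ring_pred N i = (i + N - 1) mod N"

lemma ring_pred_less: "0 < N \<Longrightarrow> ring_pred N i < N"
  by (simp add: ring_pred_def)

lemma ring_succ_eq_iff:
  assumes "0 < N" "i < N" "i' < N"
  shows "i = (i' + 1) mod N \<longleftrightarrow> i' = ring_pred N i"
proof -
  have "ring_pred N i = (if i = 0 then N - 1 else i - 1)"
  proof (cases "i = 0")
    case False
    then have "i + N - 1 = (i - 1) + N" by simp
    then have "ring_pred N i = ((i - 1) + N) mod N" by (simp add: ring_pred_def)
    also have "\<dots> = i - 1" using assms by simp
    finally show ?thesis using False by simp
  qed (use assms in \<open>simp add: ring_pred_def\<close>)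
  moreover have "(i' + 1) mod N = (if i' + 1 = N then 0 else i' + 1)" using assms by auto
  ultimately show ?thesis using assms by auto
qed

lemma ring_succ_ne:
  assumes "b < N" "k + 1 < N"
  shows "(b + 1 + k) mod N \<noteq> (b::nat)"
proof (cases "b + 1 + k < N")
  case False
  then have "(b + 1 + k) mod N = b + 1 + k - N" using assms by (simp add: mod_if)
  then show ?thesis using assms False by simp
qed simp

lemma ring_other_block:
  fixes b i :: nat
  assumes "b < N" "i < N" "i \<noteq> b"
  obtains k where "k + 1 < N" "i = (b + 1 + k) mod N"
proof (cases "b < i")
  case True
  then show thesis using assms by (intro that[of "i - b - 1"]) auto
next
  case False
  then have "b + 1 + (N - b - 1 + i) = N + i" using assms by simp
  then show thesis using assms False by (intro that[of "N - b - 1 + i"]) auto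
qed

definition ring_edge :: "nat \<Rightarrow> nat \<Rightarrow> nat \<Rightarrow> nat \<Rightarrow> nat set" where
  "ring_edge N a i e = (if e < 14 then (\<lambda>j. 10 * i + j) ` gadget_edge (i < a) e
     else {10 * i + 5, 10 * ((i + 1) mod N)})"

definition ring :: "nat \<Rightarrow> nat \<Rightarrow> graph" where
  "ring N a = ({..<10 * N}, (\<lambda>(i, e). ring_edge N a i e) ` ({..<N} \<times> {..<15}))"

lemma verts_ring: "verts (ring N a) = {..<10 * N}"
  by (simp add: ring_def verts_def)

lemma edges_ring: "edges (ring N a) = (\<lambda>(i, e). ring_edge N a i e) ` ({..<N} \<times> {..<15})"
  by (simp add: ring_def edges_def)

lemma ring_edge_in_edges: "i < N \<Longrightarrow> e < 15 \<Longrightarrow> ring_edge N a i e \<in> edges (ring N a)"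
  by (force simp: edges_ring)

lemma edges_ringE:
  assumes "E \<in> edges (ring N a)"
  obtains i e where "i < N" "e < 15" "E = ring_edge N a i e"
  using assms by (auto simp: edges_ring)

lemma block_vertex_eq_iff:
  fixes i i' j k :: nat
  assumes "j < 10" "k < 10"
  shows "10 * i + j = 10 * i' + k \<longleftrightarrow> i = i' \<and> j = k"
proof
  assume eq: "10 * i + j = 10 * i' + k"
  then have "(10 * i + j) div 10 = (10 * i' + k) div 10" by simp
  then have "i = i'" using assms by simp
  then show "i = i' \<and> j = k" using eq by simp
qed simp

lemma all_less_mult_10_iff: "(\<forall>v < 10 * N. P v) \<longleftrightarrow> (\<forall>i<N. \<forall>j<10. P (10 * i + j :: nat))"
proof
  assume "\<forall>i<N. \<forall>j<10. P (10 * i + j)"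
  moreover have "v div 10 < N" "v mod 10 < 10" "v = 10 * (v div 10) + v mod 10" if "v < 10 * N" for v
    using that by auto
  ultimately show "\<forall>v < 10 * N. P v" by metis
qed auto

lemma ring_edge_eq:
  "e < 14 \<Longrightarrow>
    ring_edge N a i e = {10 * i + fst (gadget_edges (i < a) ! e), 10 * i + snd (gadget_edges (i < a) ! e)}"
  "ring_edge N a i 14 = {10 * i + 5, 10 * ((i + 1) mod N)}"
  by (simp_all add: ring_edge_def gadget_edge_def)

lemma mem_ring_edge_iff:
  assumes "i < N" "j < 10" "e < 15"
  shows "10 * i + j \<in> ring_edge N a i' e \<longleftrightarrow>
    (i' = i \<and> j \<in> gadget_edge (i < a) e) \<or> (e = 14 \<and> j = 0 \<and> i = (i' + 1) mod N)"
proof (cases "e < 14")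
  case True
  then have "fst (gadget_edges (i' < a) ! e) < 10" "snd (gadget_edges (i' < a) ! e) < 10"
    using gadget_edges_ordered by (meson order.strict_trans)+
  then show ?thesis using True assms block_vertex_eq_iff
    by (auto simp: ring_edge_def gadget_edge_def)
next
  case False
  then show ?thesis using assms block_vertex_eq_iff[of j 5 i i'] block_vertex_eq_iff[of j 0 i "(i' + 1) mod N"]
    by (auto simp: ring_edge_def gadget_edge_def)
qed

lemma ring_edge_eq_connector:
  assumes N: "2 \<le> N" and "i < N" "i' < N" "e' < 15"
    and eq: "ring_edge N a i 14 = ring_edge N a i' e'"
  shows "i' = i \<and> e' = 14"
proof -
  have "ring_edge N a i' e' = {10 * i + 5, 10 * ((i + 1) mod N) + 0}"
    using eq ring_edge_eq(2) by simp
  then have "10 * i + 5 \<in> ring_edge N a i' e'" "10 * ((i + 1) mod N) + 0 \<in> ring_edge N a i' e'"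
    by simp_all
  then have "i' = i" "e' = 14 \<or> i' = (i + 1) mod N"
    using mem_ring_edge_iff[of i N 5 e' a i'] mem_ring_edge_iff[of "(i + 1) mod N" N 0 e' a i'] assms
    by (auto simp: gadget_edge_def)
  then show ?thesis using ring_succ_ne[OF assms(2), of 0] N by auto
qed

lemma ring_edge_inj:
  assumes N: "2 \<le> N" and "i < N" "i' < N" "e < 15" "e' < 15"
    and eq: "ring_edge N a i e = ring_edge N a i' e'"
  shows "i = i' \<and> e = e'"
proof (cases "e < 14 \<and> e' < 14")
  case True
  let ?p = "gadget_edges (i < a) ! e" and ?p' = "gadget_edges (i < a) ! e'"
  have o: "fst ?p < snd ?p" "snd ?p < 10" "fst ?p' < snd ?p'" "snd ?p' < 10"
    using gadget_edges_ordered True by auto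
  have "10 * i + fst ?p \<in> ring_edge N a i e" using True by (simp add: ring_edge_eq)
  then have "10 * i + fst ?p \<in> ring_edge N a i' e'" using eq by simp
  then have ii: "i' = i" using mem_ring_edge_iff[of i N "fst ?p" e' a i'] o True assms by auto
  then have "{10 * i + fst ?p, 10 * i + snd ?p} = {10 * i + fst ?p', 10 * i + snd ?p'}"
    using eq True by (simp add: ring_edge_eq)
  then have "?p = ?p'" using o by (auto simp: doubleton_eq_iff prod_eq_iff)
  then have "e = e'"
    using nth_eq_iff_index_eq[OF distinct_gadget_edges] length_gadget_edges True by metis
  then show ?thesis using ii by simp
next
  case False
  then consider "e = 14" | "e' = 14" using assms by linarith
  then show ?thesis
  proof cases
    case 1
    show ?thesis using ring_edge_eq_connector[OF N assms(2,3,5)] eq 1 by auto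
  next
    case 2
    show ?thesis using ring_edge_eq_connector[OF N assms(3,2,4)] eq 2 by auto
  qed
qed

definition ring_incidence :: "nat \<Rightarrow> nat \<Rightarrow> nat \<Rightarrow> nat \<Rightarrow> nat set list" where
  "ring_incidence N a i j = map (ring_edge N a i) (gadget_incidence (i < a) j) @
     (if j = 0 then [ring_edge N a (ring_pred N i) 14] else [])"

lemma ring_edge_eq_iff:
  "2 \<le> N \<Longrightarrow> i < N \<Longrightarrow> i' < N \<Longrightarrow> e < 15 \<Longrightarrow> e' < 15 \<Longrightarrow>
    ring_edge N a i e = ring_edge N a i' e' \<longleftrightarrow> i = i' \<and> e = e'"
  using ring_edge_inj by blast

lemma set_ring_incidence:
  assumes N: "2 \<le> N" and i: "i < N" and j: "j < 10"
  shows "{E \<in> edges (ring N a). 10 * i + j \<in> E} = set (ring_incidence N a i j)"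
proof -
  have p: "ring_pred N i < N" "i = (ring_pred N i + 1) mod N"
    using ring_pred_less ring_succ_eq_iff[of N i "ring_pred N i"] N i by auto
  have "10 * i + j \<in> ring_edge N a i' e \<longleftrightarrow> ring_edge N a i' e \<in> set (ring_incidence N a i j)"
    if "i' < N" "e < 15" for i' e
  proof -
    have "ring_edge N a i' e \<in> set (ring_incidence N a i j) \<longleftrightarrow>
      (i' = i \<and> j \<in> gadget_edge (i < a) e) \<or> (e = 14 \<and> j = 0 \<and> i' = ring_pred N i)"
      using N p(1) i j that
      by (auto simp: ring_incidence_def mem_gadget_incidence_iff ring_edge_eq_iff)
    then show ?thesis using mem_ring_edge_iff[OF i j that(2)] ring_succ_eq_iff[of N i i'] N i that
      by auto
  qed
  moreover have "set (ring_incidence N a i j) \<subseteq> edges (ring N a)"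
    using p(1) i gadget_incidence_less by (auto simp: ring_incidence_def intro!: ring_edge_in_edges)
  ultimately show ?thesis by (auto elim!: edges_ringE)
qed

lemma
  assumes N: "2 \<le> N" and i: "i < N" and j: "j < 10"
  shows distinct_ring_incidence: "distinct (ring_incidence N a i j)"
    and length_ring_incidence: "length (ring_incidence N a i j) = 3"
proof -
  have p: "ring_pred N i < N" using ring_pred_less N by simp
  have "inj_on (ring_edge N a i) (set (gadget_incidence (i < a) j))"
    using N i gadget_incidence_less by (auto intro: inj_onI simp: ring_edge_eq_iff)
  moreover have
    "j = 0 \<Longrightarrow> ring_edge N a (ring_pred N i) 14 \<notin> ring_edge N a i ` set (gadget_incidence (i < a) j)"
    using N i p gadget_incidence_less gadget_incidence_correct j
    by (auto simp: ring_edge_eq_iff gadget_edge_def)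
  ultimately show "distinct (ring_incidence N a i j)"
    using distinct_gadget_incidence by (auto simp: ring_incidence_def distinct_map)
  show "length (ring_incidence N a i j) = 3"
    using length_gadget_incidence[OF j] by (simp add: ring_incidence_def)
qed

lemma wf_graph_ring:
  assumes N: "2 \<le> N"
  shows "wf_graph (ring N a)"
proof -
  have "E \<subseteq> {..<10 * N} \<and> card E = 2" if E: "E \<in> edges (ring N a)" for E
  proof -
    obtain i e where ie: "i < N" "e < 15" "E = ring_edge N a i e"
      using E by (blast elim: edges_ringE)
    show ?thesis
    proof (cases "e < 14")
      case True
      then have "fst (gadget_edges (i < a) ! e) < snd (gadget_edges (i < a) ! e)"
        "snd (gadget_edges (i < a) ! e) < 10"
        using gadget_edges_ordered by auto
      moreover have "10 * i + 10 \<le> 10 * N" using ie by simp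
      ultimately show ?thesis using ie True by (auto simp: ring_edge_eq)
    next
      case False
      then have "e = 14" using ie by simp
      moreover have "10 * ((i + 1) mod N) < 10 * N" "10 * i + 5 < 10 * N" using N ie by simp_all
      moreover have "10 * i + 5 \<noteq> 10 * ((i + 1) mod N)"
        using block_vertex_eq_iff[of 5 0 i "(i + 1) mod N"] by simp
      ultimately show ?thesis using ie by (auto simp: ring_edge_eq)
    qed
  qed
  then show ?thesis by (simp add: wf_graph_def verts_ring)
qed

lemma incident_edges_ring:
  assumes "2 \<le> N" "v \<in> verts (ring N a)"
  shows "{E \<in> edges (ring N a). v \<in> E} = set (ring_incidence N a (v div 10) (v mod 10))"
  using assms set_ring_incidence[of N "v div 10" "v mod 10" a] by (simp add: verts_ring)

lemma cubic_ring: "2 \<le> N \<Longrightarrow> cubic (ring N a)"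
  unfolding cubic_def degree_def
  by (simp add: incident_edges_ring distinct_card distinct_ring_incidence length_ring_incidence verts_ring)

lemma perfect_matching_ring_iff:
  assumes N: "2 \<le> N" and M: "M \<subseteq> edges (ring N a)"
  shows "perfect_matching (ring N a) M \<longleftrightarrow>
    (\<forall>i<N. gadget_matching (i < a) (\<lambda>e. ring_edge N a i e \<in> M) (ring_edge N a (ring_pred N i) 14 \<in> M))"
proof -
  have ex1: "(\<exists>!E. E \<in> M \<and> 10 * i + j \<in> E) \<longleftrightarrow> exactly_one (map (\<lambda>E. E \<in> M) (ring_incidence N a i j))"
    if "i < N" "j < 10" for i j
  proof -
    have "(\<exists>!E. E \<in> M \<and> 10 * i + j \<in> E) \<longleftrightarrow> (\<exists>!E. E \<in> set (ring_incidence N a i j) \<and> E \<in> M)"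
      using set_ring_incidence[OF N that, of a] M by blast
    also have "\<dots> \<longleftrightarrow> exactly_one (map (\<lambda>E. E \<in> M) (ring_incidence N a i j))"
      by (rule ex1_in_set_iff_exactly_one[OF distinct_ring_incidence(1)[OF N that]])
    finally show ?thesis .
  qed
  have "perfect_matching (ring N a) M \<longleftrightarrow> (\<forall>v < 10 * N. \<exists>!E. E \<in> M \<and> v \<in> E)"
    using M by (auto simp: perfect_matching_def verts_ring)
  also have "\<dots> \<longleftrightarrow> (\<forall>i<N. \<forall>j<10. \<exists>!E. E \<in> M \<and> 10 * i + j \<in> E)"
    by (rule all_less_mult_10_iff)
  also have "\<dots> \<longleftrightarrow> (\<forall>i<N. \<forall>j<10. exactly_one (map (\<lambda>E. E \<in> M) (ring_incidence N a i j)))"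
    by (simp only: ex1 cong: imp_cong)
  finally show ?thesis by (simp add: gadget_matching_def ring_incidence_def comp_def)
qed

lemma card_subset_edges_ring:
  assumes N: "2 \<le> N" and U: "U \<subseteq> edges (ring N a)"
  shows "card U = (\<Sum>i<N. card {e. e < 15 \<and> ring_edge N a i e \<in> U})"
proof -
  let ?S = "SIGMA i:{..<N}. {e. e < 15 \<and> ring_edge N a i e \<in> U}"
  have "inj_on (\<lambda>(i, e). ring_edge N a i e) ?S"
    using N by (auto intro: inj_onI simp: ring_edge_eq_iff)
  moreover have "(\<lambda>(i, e). ring_edge N a i e) ` ?S = U"
  proof
    show "U \<subseteq> (\<lambda>(i, e). ring_edge N a i e) ` ?S"
    proof
      fix E assume "E \<in> U"
      then obtain i e where "i < N" "e < 15" "E = ring_edge N a i e" using U by (blast elim: edges_ringE)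
      then show "E \<in> (\<lambda>(i, e). ring_edge N a i e) ` ?S" using \<open>E \<in> U\<close> by force
    qed
  qed auto
  ultimately have "card U = card ?S" using card_image by fastforce
  also have "\<dots> = (\<Sum>i<N. card {e. e < 15 \<and> ring_edge N a i e \<in> U})" by (rule card_SigmaI) auto
  finally show ?thesis .
qed

lemma card_edges_ring:
  assumes N: "2 \<le> N"
  shows "card (edges (ring N a)) = 15 * N"
proof -
  have "{e. e < 15 \<and> ring_edge N a i e \<in> edges (ring N a)} = {..<15}" if "i < N" for i
    using that ring_edge_in_edges by auto
  then show ?thesis using card_subset_edges_ring[OF N subset_refl] by simp
qed

section \<open>Perfect matchings of the ring\<close>

lemma card_petersen_gadget_union_le:
  assumes N: "2 \<le> N" and i: "i < N" "i < a"
    and pm: "perfect_matching (ring N a) M1" "perfect_matching (ring N a) M2" "perfect_matching (ring N a) M3"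
  shows "card {e. e < 15 \<and> ring_edge N a i e \<in> M1 \<union> M2 \<union> M3} \<le> 12"
proof -
  have pattern: "\<exists>k<6. \<forall>e<15. ring_edge N a i e \<in> M \<longleftrightarrow> e \<in> set (petersen_pattern k)"
    if "perfect_matching (ring N a) M" for M
  proof -
    have "M \<subseteq> edges (ring N a)" using that by (simp add: perfect_matching_def)
    then have "gadget_matching True (\<lambda>e. ring_edge N a i e \<in> M) (ring_edge N a (ring_pred N i) 14 \<in> M)"
      using that perfect_matching_ring_iff[OF N] i by auto
    then show ?thesis by (rule gadget_matching_petersen_pattern)
  qed
  obtain k1 where k1: "k1 < 6" "\<forall>e<15. ring_edge N a i e \<in> M1 \<longleftrightarrow> e \<in> set (petersen_pattern k1)"
    using pattern[OF pm(1)] by blast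
  obtain k2 where k2: "k2 < 6" "\<forall>e<15. ring_edge N a i e \<in> M2 \<longleftrightarrow> e \<in> set (petersen_pattern k2)"
    using pattern[OF pm(2)] by blast
  obtain k3 where k3: "k3 < 6" "\<forall>e<15. ring_edge N a i e \<in> M3 \<longleftrightarrow> e \<in> set (petersen_pattern k3)"
    using pattern[OF pm(3)] by blast
  have "{e. e < 15 \<and> ring_edge N a i e \<in> M1 \<union> M2 \<union> M3} =
      set (petersen_pattern k1 @ petersen_pattern k2 @ petersen_pattern k3)"
    using k1 k2 k3 petersen_pattern_less[OF k1(1)] petersen_pattern_less[OF k2(1)]
      petersen_pattern_less[OF k3(1)] by auto
  then show ?thesis using card_three_petersen_patterns[OF k1(1) k2(1) k3(1)] by simp
qed

lemma sum_lessThan_if_less: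
  fixes c d :: nat
  assumes "a \<le> N"
  shows "(\<Sum>i<N. if i < a then c else d) = c * a + d * (N - a)"
proof -
  have "{..<N} \<inter> {i. i < a} = {..<a}" "{..<N} \<inter> - {i. i < a} = {a..<N}" using assms by auto
  then show ?thesis by (simp add: sum.If_cases)
qed

lemma card_union_perfect_matchings_ring_le:
  assumes N: "2 \<le> N" and a: "a \<le> N"
    and pm: "perfect_matching (ring N a) M1" "perfect_matching (ring N a) M2" "perfect_matching (ring N a) M3"
  shows "card (M1 \<union> M2 \<union> M3) \<le> 12 * a + 15 * (N - a)"
proof -
  let ?U = "M1 \<union> M2 \<union> M3"
  have "?U \<subseteq> edges (ring N a)" using pm by (auto simp: perfect_matching_def)
  then have "card ?U = (\<Sum>i<N. card {e. e < 15 \<and> ring_edge N a i e \<in> ?U})"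
    by (rule card_subset_edges_ring[OF N])
  also have "\<dots> \<le> (\<Sum>i<N. if i < a then 12 else 15)"
  proof (rule sum_mono)
    fix i assume i: "i \<in> {..<N}"
    show "card {e. e < 15 \<and> ring_edge N a i e \<in> ?U} \<le> (if i < a then 12 else 15)"
    proof (cases "i < a")
      case True
      then show ?thesis using card_petersen_gadget_union_le[OF N _ True pm] i by simp
    next
      case False
      have "card {e. e < 15 \<and> ring_edge N a i e \<in> ?U} \<le> card {..<15::nat}"
        by (rule card_mono) auto
      then show ?thesis using False by simp
    qed
  qed
  also have "\<dots> = 12 * a + 15 * (N - a)" using a by (rule sum_lessThan_if_less)
  finally show ?thesis .
qed

definition cover_matching :: "nat \<Rightarrow> nat \<Rightarrow> nat \<Rightarrow> nat set set" where
  "cover_matching N a k = (\<lambda>(i, e). ring_edge N a i e) ` (SIGMA i:{..<N}. set (cover_pattern k (i < a)))"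

lemma cover_matching_subset: "cover_matching N a k \<subseteq> edges (ring N a)"
  by (auto simp: cover_matching_def intro!: ring_edge_in_edges dest: cover_pattern_less)

lemma ring_edge_in_cover_matching_iff:
  assumes N: "2 \<le> N" and i: "i < N" and e: "e < 15"
  shows "ring_edge N a i e \<in> cover_matching N a k \<longleftrightarrow> e \<in> set (cover_pattern k (i < a))"
  using assms cover_pattern_less by (force simp: cover_matching_def ring_edge_eq_iff)

lemma perfect_matching_cover_matching:
  assumes N: "2 \<le> N"
  shows "perfect_matching (ring N a) (cover_matching N a k)"
  unfolding perfect_matching_ring_iff[OF N cover_matching_subset]
proof (intro allI impI)
  fix i assume i: "i < N"
  have p: "ring_pred N i < N" using ring_pred_less N by simp
  have "gadget_matching (i < a) (\<lambda>e. ring_edge N a i e \<in> cover_matching N a k) y =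
      gadget_matching (i < a) (\<lambda>e. e \<in> set (cover_pattern k (i < a))) y" for y
    by (rule gadget_matching_cong) (simp add: ring_edge_in_cover_matching_iff[OF N i])
  then show "gadget_matching (i < a) (\<lambda>e. ring_edge N a i e \<in> cover_matching N a k)
      (ring_edge N a (ring_pred N i) 14 \<in> cover_matching N a k)"
    using ring_edge_in_cover_matching_iff[OF N p, of 14] gadget_matching_cover_pattern by simp
qed

lemma card_union_cover_matchings:
  assumes N: "2 \<le> N" and a: "a \<le> N"
  shows "card (cover_matching N a 0 \<union> cover_matching N a 1 \<union> cover_matching N a 2) = 12 * a + 15 * (N - a)"
proof -
  let ?U = "cover_matching N a 0 \<union> cover_matching N a 1 \<union> cover_matching N a 2"
  have "{e. e < 15 \<and> ring_edge N a i e \<in> ?U} =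
      set (cover_pattern 0 (i < a) @ cover_pattern 1 (i < a) @ cover_pattern 2 (i < a))" if "i < N" for i
    using ring_edge_in_cover_matching_iff[OF N that] cover_pattern_less by auto
  moreover have "?U \<subseteq> edges (ring N a)" using cover_matching_subset by auto
  ultimately have "card ?U = (\<Sum>i<N. if i < a then 12 else 15)"
    using card_subset_edges_ring[OF N] card_cover_patterns by simp
  also have "\<dots> = 12 * a + 15 * (N - a)" using a by (rule sum_lessThan_if_less)
  finally show ?thesis .
qed

lemma finite_edges_ring: "finite (edges (ring N a))"
  by (simp add: edges_ring)

lemma m3_ring:
  assumes "2 \<le> N" "a \<le> N"
  shows "m3 (ring N a) = real (12 * a + 15 * (N - a)) / real (15 * N)"
  using m3_eqI[OF finite_edges_ring card_union_perfect_matchings_ring_le[OF assms]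
      perfect_matching_cover_matching[OF assms(1)] perfect_matching_cover_matching[OF assms(1)]
      perfect_matching_cover_matching[OF assms(1)] card_union_cover_matchings[OF assms]]
  by (simp add: card_edges_ring assms)

section \<open>Connectivity of the ring\<close>

text \<open>For a deleted gadget vertex w < 10 (or w = 10: nothing deleted), tree_parent T w and
  tree_depth T w encode a spanning forest of the remaining gadget vertices, with the depth decreasing
  towards the roots: the surviving vertices among 0 and 5 (only 0 when w = 10).\<close>

definition tree_parent :: "bool \<Rightarrow> nat \<Rightarrow> nat \<Rightarrow> nat" where
  "tree_parent T w j = (if T then [
      [0,2,7,8,9,5,8,5,5,7],
      [0,0,7,4,0,5,8,5,5,4],
      [0,0,0,4,0,5,1,5,5,4],
      [0,0,1,0,0,5,1,5,5,4],
      [0,0,1,8,0,5,1,5,5,7],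
      [0,0,1,4,0,0,1,2,6,4],
      [0,0,1,4,0,5,0,5,5,4],
      [0,0,1,4,0,5,1,0,5,4],
      [0,0,1,4,0,5,1,5,0,4],
      [0,0,1,4,0,5,1,5,5,0],
      [0,0,1,4,0,7,1,2,6,4]]
     else [
      [0,6,1,4,9,5,5,6,9,5],
      [0,0,3,4,0,5,5,6,9,5],
      [0,0,0,4,0,5,5,6,9,5],
      [0,0,1,0,0,5,5,6,9,5],
      [0,0,1,2,0,5,5,6,9,5],
      [0,0,1,4,0,0,1,2,3,4],
      [0,0,1,4,0,5,0,2,9,5],
      [0,0,1,4,0,5,5,0,9,5],
      [0,0,1,4,0,5,5,6,0,5],
      [0,0,1,4,0,5,5,6,3,0],
      [0,0,1,4,0,6,1,2,3,4]]) ! w ! j"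

definition tree_depth :: "bool \<Rightarrow> nat \<Rightarrow> nat \<Rightarrow> nat" where
  "tree_depth T w j = (if T then [
      [0,3,2,2,3,0,2,1,1,2],
      [0,0,2,2,1,0,2,1,1,2],
      [0,1,0,2,1,0,2,1,1,2],
      [0,1,2,0,1,0,2,1,1,2],
      [0,1,2,2,0,0,2,1,1,2],
      [0,1,2,2,1,0,2,3,3,2],
      [0,1,2,2,1,0,0,1,1,2],
      [0,1,2,2,1,0,2,0,1,2],
      [0,1,2,2,1,0,2,1,0,2],
      [0,1,2,2,1,0,2,1,1,0],
      [0,1,2,2,1,4,2,3,3,2]]
     else [
      [0,2,3,3,2,0,1,2,2,1],
      [0,0,3,2,1,0,1,2,2,1],
      [0,1,0,2,1,0,1,2,2,1],
      [0,1,2,0,1,0,1,2,2,1],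
      [0,1,2,3,0,0,1,2,2,1],
      [0,1,2,2,1,0,2,3,3,2],
      [0,1,2,2,1,0,0,3,2,1],
      [0,1,2,2,1,0,1,0,2,1],
      [0,1,2,2,1,0,1,2,0,1],
      [0,1,2,2,1,0,1,2,3,0],
      [0,1,2,2,1,3,2,3,3,2]]) ! w ! j"

definition tree_root :: "nat \<Rightarrow> nat \<Rightarrow> bool" where
  "tree_root w j \<longleftrightarrow> (j = 0 \<and> w \<noteq> 0) \<or> (j = 5 \<and> w \<noteq> 5 \<and> w \<noteq> 10)"

lemma gadget_spanning_forest:
  "\<forall>w<11. \<forall>j<10. j \<noteq> w \<and> \<not> tree_root w j \<longrightarrow>
     ((j, tree_parent T w j) \<in> set (gadget_edges T) \<or> (tree_parent T w j, j) \<in> set (gadget_edges T)) \<and>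
     tree_parent T w j \<noteq> w \<and> tree_parent T w j < 10 \<and> tree_depth T w (tree_parent T w j) < tree_depth T w j"
  by (cases T) (simp_all add: all_less_numeral tree_parent_def tree_depth_def tree_root_def gadget_edges_def)

lemma adj_delete_vertex_ring_gadget:
  assumes "i < N" "(j, k) \<in> set (gadget_edges (i < a))" "x \<noteq> 10 * i + j" "x \<noteq> 10 * i + k"
  shows "(10 * i + j, 10 * i + k) \<in> adj (delete_vertex (ring N a) x)"
proof -
  obtain e where "e < 14" "gadget_edges (i < a) ! e = (j, k)"
    using assms(2) length_gadget_edges by (metis in_set_conv_nth)
  then have "ring_edge N a i e = {10 * i + j, 10 * i + k}" by (simp add: ring_edge_eq)
  then show ?thesis using ring_edge_in_edges[OF assms(1), of e a] \<open>e < 14\<close> assms(3,4)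
    by (simp add: adj_iff_edge)
qed

lemma adj_delete_vertex_ring_connector:
  assumes "c < N" "x \<noteq> 10 * c + 5" "x \<noteq> 10 * ((c + 1) mod N)"
  shows "(10 * c + 5, 10 * ((c + 1) mod N)) \<in> adj (delete_vertex (ring N a) x)"
  using assms ring_edge_in_edges[OF assms(1), of 14 a] by (simp add: adj_iff_edge ring_edge_eq)

lemma reaches_tree_root:
  assumes i: "i < N" and w: "w \<le> 10" and x: "\<forall>j<10. 10 * i + j = x \<longleftrightarrow> j = w"
  shows "j < 10 \<Longrightarrow> j \<noteq> w \<Longrightarrow>
    \<exists>r. tree_root w r \<and> (10 * i + j, 10 * i + r) \<in> (adj (delete_vertex (ring N a) x))\<^sup>*"
proof (induction j rule: measure_induct_rule[where f = "tree_depth (i < a) w"])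
  case (less j)
  let ?R = "adj (delete_vertex (ring N a) x)" and ?p = "tree_parent (i < a) w j"
  show ?case
  proof (cases "tree_root w j")
    case False
    then have p: "(j, ?p) \<in> set (gadget_edges (i < a)) \<or> (?p, j) \<in> set (gadget_edges (i < a))"
      "?p \<noteq> w" "?p < 10" "tree_depth (i < a) w ?p < tree_depth (i < a) w j"
      using gadget_spanning_forest[of "i < a"] w less.prems by auto
    then obtain r where r: "tree_root w r" "(10 * i + ?p, 10 * i + r) \<in> ?R\<^sup>*"
      using less.IH by blast
    have "x \<noteq> 10 * i + j" "x \<noteq> 10 * i + ?p" using x less.prems p(2,3) by auto
    then have "(10 * i + j, 10 * i + ?p) \<in> ?R"
      using p(1) adj_delete_vertex_ring_gadget[OF i] adj_sym by blast
    then show ?thesis using r by (blast intro: converse_rtrancl_into_rtrancl)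
  qed blast
qed

lemma intact_gadget_reaches_vertex_0:
  assumes "i < N" "j < 10" "i \<noteq> b" "w < 10"
  shows "(10 * i + j, 10 * i) \<in> (adj (delete_vertex (ring N a) (10 * b + w)))\<^sup>*"
proof -
  have "\<forall>j<10. 10 * i + j = 10 * b + w \<longleftrightarrow> j = 10" using assms block_vertex_eq_iff by auto
  from reaches_tree_root[OF assms(1) _ this assms(2)]
  obtain r where
    "tree_root 10 r" "(10 * i + j, 10 * i + r) \<in> (adj (delete_vertex (ring N a) (10 * b + w)))\<^sup>*"
    using assms(2) by auto
  then show ?thesis by (simp add: tree_root_def)
qed

lemma ring_walk_delete_vertex:
  assumes N: "2 \<le> N" and b: "b < N" and w: "w < 10" and k: "k + 1 < N"
  shows "(10 * ((b + 1 + k) mod N), 10 * ((b + 1) mod N))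
    \<in> (adj (delete_vertex (ring N a) (10 * b + w)))\<^sup>*"
  using k
proof (induction k)
  case (Suc k)
  let ?R = "adj (delete_vertex (ring N a) (10 * b + w))"
  define c where "c = (b + 1 + k) mod N"
  have c: "c < N" "c \<noteq> b" using N ring_succ_ne[OF b] Suc.prems by (auto simp: c_def)
  have c1: "(c + 1) mod N = (b + 1 + Suc k) mod N" by (simp add: c_def mod_Suc_eq)
  then have "(c + 1) mod N \<noteq> b" using ring_succ_ne[OF b Suc.prems] by simp
  then have "(10 * c + 5, 10 * ((c + 1) mod N)) \<in> ?R"
    using adj_delete_vertex_ring_connector[OF c(1)] block_vertex_eq_iff w c(2) by simp
  then have "(10 * ((c + 1) mod N), 10 * c + 5) \<in> ?R" by (rule adj_sym)
  moreover have "(10 * c + 5, 10 * c) \<in> ?R\<^sup>*" using intact_gadget_reaches_vertex_0[OF c(1) _ c(2) w] by simp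
  moreover have "(10 * c, 10 * ((b + 1) mod N)) \<in> ?R\<^sup>*" using Suc by (simp add: c_def)
  ultimately show ?case using c1 by (metis converse_rtrancl_into_rtrancl rtrancl_trans)
qed simp

lemma intact_gadget_reaches_next_gadget:
  assumes N: "2 \<le> N" and "b < N" "w < 10" "i < N" "i \<noteq> b" "j < 10"
  shows "(10 * i + j, 10 * ((b + 1) mod N)) \<in> (adj (delete_vertex (ring N a) (10 * b + w)))\<^sup>*"
proof -
  obtain k where "k + 1 < N" "i = (b + 1 + k) mod N" using ring_other_block[OF assms(2,4,5)] .
  then show ?thesis
    using intact_gadget_reaches_vertex_0[OF assms(4,6,5,3)] ring_walk_delete_vertex[OF assms(1-3)]
    by (metis rtrancl_trans)
qed

lemma tree_root_reaches_next_gadget: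
  assumes N: "2 \<le> N" and b: "b < N" and w: "w < 10" and r: "tree_root w r"
  shows "(10 * b + r, 10 * ((b + 1) mod N)) \<in> (adj (delete_vertex (ring N a) (10 * b + w)))\<^sup>*"
proof -
  let ?R = "adj (delete_vertex (ring N a) (10 * b + w))"
  have succ: "(b + 1) mod N \<noteq> b" using ring_succ_ne[OF b, of 0] N by simp
  consider "r = 5" "w \<noteq> 5" | "r = 0" "w \<noteq> 0" using r w by (auto simp: tree_root_def)
  then show ?thesis
  proof cases
    case 1
    then show ?thesis using adj_delete_vertex_ring_connector[OF b, of "10 * b + w" a] succ w block_vertex_eq_iff
      by auto
  next
    case 2
    define p where "p = ring_pred N b"
    have p: "p < N" "b = (p + 1) mod N" using ring_pred_less ring_succ_eq_iff[of N b p] N b by (auto simp: p_def)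
    then have "p \<noteq> b" using ring_succ_ne[OF p(1), of 0] N by auto
    then have "(10 * p + 5, 10 * b) \<in> ?R"
      using adj_delete_vertex_ring_connector[OF p(1), of "10 * b + w" a] p(2) 2 w block_vertex_eq_iff by auto
    then have "(10 * b, 10 * p + 5) \<in> ?R" by (rule adj_sym)
    moreover have "(10 * p + 5, 10 * ((b + 1) mod N)) \<in> ?R\<^sup>*"
      using intact_gadget_reaches_next_gadget[OF N b w p(1) \<open>p \<noteq> b\<close>] by simp
    ultimately show ?thesis using 2 by (simp add: converse_rtrancl_into_rtrancl)
  qed
qed

lemma connected_delete_vertex_ring:
  assumes N: "2 \<le> N" and x: "x \<in> verts (ring N a)"
  shows "connected_graph (delete_vertex (ring N a) x)"
proof -
  let ?R = "adj (delete_vertex (ring N a) x)"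
  obtain b w where bw: "x = 10 * b + w" "b < N" "w < 10"
    using x by (intro that[of "x div 10" "x mod 10"]) (auto simp: verts_ring less_mult_imp_div_less)
  have to_next: "(10 * i + j, 10 * ((b + 1) mod N)) \<in> ?R\<^sup>*" if ij: "i < N" "j < 10" "10 * i + j \<noteq> x" for i j
  proof (cases "i = b")
    case True
    have "\<forall>j<10. 10 * b + j = 10 * b + w \<longleftrightarrow> j = w" by simp
    from reaches_tree_root[OF bw(2) _ this, of j a] obtain r
      where "tree_root w r" "(10 * b + j, 10 * b + r) \<in> ?R\<^sup>*"
      using ij True bw by auto
    then show ?thesis using tree_root_reaches_next_gadget[OF N bw(2,3)] True bw(1) by (metis rtrancl_trans)
  qed (use intact_gadget_reaches_next_gadget[OF N bw(2,3)] bw(1) ij in simp)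
  have "(u, 10 * ((b + 1) mod N)) \<in> ?R\<^sup>*" if "u \<in> verts (delete_vertex (ring N a) x)" for u
    using that to_next[of "u div 10" "u mod 10"] by (auto simp: verts_ring less_mult_imp_div_less)
  moreover have "verts (delete_vertex (ring N a) x) \<noteq> {}"
  proof -
    have "0 \<in> verts (delete_vertex (ring N a) x) \<or> 1 \<in> verts (delete_vertex (ring N a) x)"
      using N by (auto simp: verts_ring)
    then show ?thesis by blast
  qed
  ultimately show ?thesis unfolding connected_graph_def by (meson rtrancl_adj_sym rtrancl_trans)
qed

lemma wf_cubic_two_connected_bridgeless_ring:
  assumes "2 \<le> N"
  shows "wf_graph (ring N a) \<and> cubic (ring N a) \<and> two_connected (ring N a) \<and> bridgeless (ring N a)"
proof -
  have "\<forall>v\<in>verts (ring N a). connected_graph (delete_vertex (ring N a) v)"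
    using connected_delete_vertex_ring[OF assms] by blast
  moreover have "card (verts (ring N a)) \<ge> 3" using assms by (simp add: verts_ring)
  ultimately show ?thesis using wf_graph_ring[OF assms] cubic_ring[OF assms]
    by (simp add: two_connected_if_connected_delete_vertex bridgeless_if_connected_delete_vertex)
qed

section \<open>Realising a rational\<close>

lemma rat_as_fraction_of_nat:
  assumes "4/5 \<le> r" "r < 1"
  obtains P Q :: nat where "4 * Q \<le> 5 * P" "P < Q" "of_rat r = real P / real Q"
proof -
  obtain p q where pq: "quotient_of r = (p, q)" by (cases "quotient_of r")
  have q: "q > 0" and r: "r = of_int p / of_int q"
    using quotient_of_denom_pos[OF pq] quotient_of_div[OF pq] by simp_all
  have "4 * of_int q \<le> (5 * of_int p :: rat)" "of_int p < (of_int q :: rat)"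
    using assms q unfolding r by (simp_all add: field_simps)
  then have "4 * q \<le> 5 * p" "p < q" by linarith+
  moreover have "of_rat r = real_of_int p / real_of_int q" unfolding r by (simp add: of_rat_divide)
  moreover have "0 \<le> p" using q \<open>4 * q \<le> 5 * p\<close> by linarith
  ultimately have "4 * nat q \<le> 5 * nat p" "nat p < nat q" "of_rat r = real (nat p) / real (nat q)"
    by simp_all
  then show thesis by (rule that)
qed

lemma m3_ring_fraction:
  assumes PQ: "4 * Q \<le> 5 * P" "P < Q" and N: "2 \<le> Q * t"
  shows "m3 (ring (Q * t) (5 * (Q - P) * t)) = real P / real Q"
proof -
  have t: "0 < t" using N by (cases t) auto
  have "5 * (Q - P) \<le> Q" using PQ by simp
  then have a: "5 * (Q - P) * t \<le> Q * t" by (rule mult_le_mono1)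
  have "real (12 * (5 * (Q - P) * t) + 15 * (Q * t - 5 * (Q - P) * t)) = 15 * real P * real t"
    using PQ a by (simp add: of_nat_diff algebra_simps)
  then show ?thesis using m3_ring[OF N a] PQ t by (simp add: field_simps)
qed

theorem theorem1:
  fixes r :: rat
  assumes "4/5 \<le> r" and "r < 1"
  shows "\<exists>S :: graph set. infinite S \<and>
    (\<forall>G\<in>S. wf_graph G \<and> cubic G \<and> two_connected G \<and> bridgeless G \<and> m3 G = of_rat r) \<and>
    (\<forall>G\<in>S. \<forall>H\<in>S. G \<noteq> H \<longrightarrow> \<not> graph_iso G H)"
proof -
  obtain P Q where PQ: "4 * Q \<le> 5 * P" "P < Q" and r: "of_rat r = real P / real Q"
    using rat_as_fraction_of_nat[OF assms] .
  define G where "G t = ring (Q * Suc t) (5 * (Q - P) * Suc t)" for t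
  have "2 \<le> Q" using PQ by linarith
  then have N: "2 \<le> Q * Suc t" for t by simp
  have good: "wf_graph (G t) \<and> cubic (G t) \<and> two_connected (G t) \<and> bridgeless (G t) \<and> m3 (G t) = of_rat r"
    for t using wf_cubic_two_connected_bridgeless_ring[OF N] m3_ring_fraction[OF PQ N] r by (simp add: G_def)
  have card_neq: "card (verts (G s)) \<noteq> card (verts (G t))" if "s \<noteq> t" for s t
    using that PQ by (simp add: G_def verts_ring)
  then have "inj G" by (intro injI) metis
  then have "infinite (range G)" using finite_imageD infinite_UNIV_nat by blast
  moreover have "\<not> graph_iso (G s) (G t)" if "G s \<noteq> G t" for s t
    using that card_neq card_verts_eq_if_graph_iso by metis
  ultimately show ?thesis using good by (intro exI[of _ "range G"]) auto
qed

end
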